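(* Let $\Omega\subset\mathbb{R}^N$ be an open domain, let $g:\mathbb{R}^N\setminus\Omega\to\mathbb{R}$, and let $\mathcal{A}:\Omega\times\mathcal{X}\times\mathbb{R}\to\mathbb{R}$ satisfy assumptions (a), (b), (c) below, with associated operator $\mathfrak{a}$ and extensions $\overline{\mathfrak{a}},\underline{\mathfrak{a}},\overline{\mathcal{A}},\underline{\mathcal{A}}$. Let $u\in\overline{\mathcal{X}}$ with $u\ge g$ on $\mathbb{R}^N\setminus\Omega$. Then the following are equivalent: (i) for every $x\in\Omega$, $\mathcal{A}(x,\varphi,u(x))\ge0$ (equivalently $u(x)\ge\mathfrak{a}(x,\varphi)$) for all $\varphi\in\mathcal{X}$ with $\varphi\le u$; (ii) $u(x)\ge\overline{\mathfrak{a}}(x,u)$ for all $x\in\Omega$; (iii) $\overline{\mathcal{A}}(x,u,u(x))\ge0$ for all $x\in\Omega$. Analogously, if $u\in\overline{\mathcal{X}}$ with $u\le g$ on $\mathbb{R}^N\setminus\Omega$, the following are equivalent: (i') for every $x\in\Omega$, $\mathcal{A}(x,\varphi,u(x))\le0$ (equivalently $u(x)\le\mathfrak{a}(x,\varphi)$) for all $\varphi\in\mathcal{X}$ with $\varphi\ge u$; (ii') $u(x)\le\underline{\mathfrak{a}}(x,u)$ for all $x\in\Omega$; (iii') $\underline{\mathcal{A}}(x,u,u(x))\le0$ for all $x\in\Omega$.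
   Context: $\overline{\mathcal{X}}$ is the set of bounded functions $\mathbb{R}^N\to\mathbb{R}$, and $\mathcal{X}\subset\overline{\mathcal{X}}$ a fixed subset. Assumptions: (a) $\varphi_1\le\varphi_2$ implies $\mathcal{A}(x,\varphi_2,s)\le\mathcal{A}(x,\varphi_1,s)$; (b) $s_1\le s_2$ implies $\mathcal{A}(x,\varphi,s_1)\le\mathcal{A}(x,\varphi,s_2)$; (c) for every $(x,\varphi)$ the map $s\mapsto\mathcal{A}(x,\varphi,s)$ has exactly one zero, denoted $\mathfrak{a}(x,\varphi)$. For $\psi\in\overline{\mathcal{X}}$: $\overline{\mathfrak{a}}(x,\psi):=\sup\{\mathfrak{a}(x,\varphi):\varphi\in\mathcal{X},\varphi\le\psi\}$, $\underline{\mathfrak{a}}(x,\psi):=\inf\{\mathfrak{a}(x,\varphi):\varphi\in\mathcal{X},\varphi\ge\psi\}$, $\overline{\mathcal{A}}(x,\psi,s):=\inf\{\mathcal{A}(x,\varphi,s):\varphi\in\mathcal{X},\varphi\le\psi\}$, $\underline{\mathcal{A}}(x,\psi,s):=\sup\{\mathcal{A}(x,\varphi,s):\varphi\in\mathcal{X},\varphi\ge\psi\}$. (Conditions (i)/(i') are the test-function definition of viscosity super/subsolution of the DPP $\mathcal{A}(x,u,u(x))=0$ in $\Omega$, $u=g$ outside; (ii)-(iii)/(ii')-(iii') are the pointwise definition via the extended operators.) *)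

theory Defs
  imports "HOL-Analysis.Analysis"
begin

text \<open>Bounded functions R^N -> R; here R^N is an arbitrary euclidean space 'a.\<close>
definition Xbar :: "('a::euclidean_space \<Rightarrow> real) set" where
  "Xbar = {u. bounded (range u)}"

definition frak_a :: "('a \<Rightarrow> ('a \<Rightarrow> real) \<Rightarrow> real \<Rightarrow> real) \<Rightarrow> 'a \<Rightarrow> ('a \<Rightarrow> real) \<Rightarrow> real" where
  "frak_a A x \<phi> = (THE s. A x \<phi> s = 0)"

text \<open>Extended operators, valued in the extended reals (sup of empty set = -infinity etc.).\<close>
definition frak_a_up ::
  "('a \<Rightarrow> real) set \<Rightarrow> ('a \<Rightarrow> ('a \<Rightarrow> real) \<Rightarrow> real \<Rightarrow> real) \<Rightarrow> 'a \<Rightarrow> ('a \<Rightarrow> real) \<Rightarrow> ereal" where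
  "frak_a_up X A x \<psi> = (SUP \<phi>\<in>{\<phi>\<in>X. \<phi> \<le> \<psi>}. ereal (frak_a A x \<phi>))"

definition frak_a_low ::
  "('a \<Rightarrow> real) set \<Rightarrow> ('a \<Rightarrow> ('a \<Rightarrow> real) \<Rightarrow> real \<Rightarrow> real) \<Rightarrow> 'a \<Rightarrow> ('a \<Rightarrow> real) \<Rightarrow> ereal" where
  "frak_a_low X A x \<psi> = (INF \<phi>\<in>{\<phi>\<in>X. \<phi> \<ge> \<psi>}. ereal (frak_a A x \<phi>))"

definition A_up ::
  "('a \<Rightarrow> real) set \<Rightarrow> ('a \<Rightarrow> ('a \<Rightarrow> real) \<Rightarrow> real \<Rightarrow> real) \<Rightarrow> 'a \<Rightarrow> ('a \<Rightarrow> real) \<Rightarrow> real \<Rightarrow> ereal" where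
  "A_up X A x \<psi> s = (INF \<phi>\<in>{\<phi>\<in>X. \<phi> \<le> \<psi>}. ereal (A x \<phi> s))"

definition A_low ::
  "('a \<Rightarrow> real) set \<Rightarrow> ('a \<Rightarrow> ('a \<Rightarrow> real) \<Rightarrow> real \<Rightarrow> real) \<Rightarrow> 'a \<Rightarrow> ('a \<Rightarrow> real) \<Rightarrow> real \<Rightarrow> ereal" where
  "A_low X A x \<psi> s = (SUP \<phi>\<in>{\<phi>\<in>X. \<phi> \<ge> \<psi>}. ereal (A x \<phi> s))"

end

theory Submission
  imports Defs
begin

(* For nondecreasing s |-> A x phi s with unique zero a(x,phi), the sign of A x phi s is the sign
   of s - a(x,phi). Hence each test-function condition (i), (i') is equivalent, pointwise in x, to a
   bound of u(x) by the sup (inf) of the a(x,phi), and also to a sign condition on the inf (sup) of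
   the A x phi (u x). Neither the monotonicity (a) in phi nor the exterior data g enter the argument. *)

lemma mono_unique_zero_sign_iff:
  fixes f :: "real \<Rightarrow> real"
  assumes "mono f" and zero: "f t = 0" and unique: "\<And>r. f r = 0 \<Longrightarrow> r = t"
  shows mono_unique_zero_nonneg_iff: "0 \<le> f s \<longleftrightarrow> t \<le> s"
    and mono_unique_zero_nonpos_iff: "f s \<le> 0 \<longleftrightarrow> s \<le> t"
proof -
  have "f s \<le> 0" if "s \<le> t" using monoD[OF \<open>mono f\<close> that] zero by simp
  moreover have "0 \<le> f s" if "t \<le> s" using monoD[OF \<open>mono f\<close> that] zero by simp
  moreover have "s = t" if "f s = 0" using unique that .
  ultimately show "0 \<le> f s \<longleftrightarrow> t \<le> s" and "f s \<le> 0 \<longleftrightarrow> s \<le> t"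
    by (metis nle_le order_antisym)+
qed

lemma frak_a_le_iff:
  assumes "mono (A x \<phi>)" and "\<exists>!s. A x \<phi> s = 0"
  shows "frak_a A x \<phi> \<le> s \<longleftrightarrow> 0 \<le> A x \<phi> s"
  unfolding frak_a_def using theI'[OF assms(2)] assms by (metis mono_unique_zero_nonneg_iff)

lemma le_frak_a_iff:
  assumes "mono (A x \<phi>)" and "\<exists>!s. A x \<phi> s = 0"
  shows "s \<le> frak_a A x \<phi> \<longleftrightarrow> A x \<phi> s \<le> 0"
  unfolding frak_a_def using theI'[OF assms(2)] assms by (metis mono_unique_zero_nonpos_iff)

lemma frak_a_up_le_iff:
  assumes "\<And>\<phi>. \<phi> \<in> X \<Longrightarrow> mono (A x \<phi>) \<and> (\<exists>!s. A x \<phi> s = 0)"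
  shows "frak_a_up X A x \<psi> \<le> ereal s \<longleftrightarrow> (\<forall>\<phi>\<in>X. \<phi> \<le> \<psi> \<longrightarrow> 0 \<le> A x \<phi> s)"
proof -
  have "ereal (frak_a A x \<phi>) \<le> ereal s \<longleftrightarrow> 0 \<le> A x \<phi> s" if "\<phi> \<in> X" for \<phi>
    using assms[OF that] by (simp add: frak_a_le_iff)
  then show ?thesis unfolding frak_a_up_def SUP_le_iff by auto
qed

lemma le_frak_a_low_iff:
  assumes "\<And>\<phi>. \<phi> \<in> X \<Longrightarrow> mono (A x \<phi>) \<and> (\<exists>!s. A x \<phi> s = 0)"
  shows "ereal s \<le> frak_a_low X A x \<psi> \<longleftrightarrow> (\<forall>\<phi>\<in>X. \<psi> \<le> \<phi> \<longrightarrow> A x \<phi> s \<le> 0)"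
proof -
  have "ereal s \<le> ereal (frak_a A x \<phi>) \<longleftrightarrow> A x \<phi> s \<le> 0" if "\<phi> \<in> X" for \<phi>
    using assms[OF that] by (simp add: le_frak_a_iff)
  then show ?thesis unfolding frak_a_low_def le_INF_iff by auto
qed

lemma A_up_nonneg_iff: "0 \<le> A_up X A x \<psi> s \<longleftrightarrow> (\<forall>\<phi>\<in>X. \<phi> \<le> \<psi> \<longrightarrow> 0 \<le> A x \<phi> s)"
  unfolding A_up_def le_INF_iff zero_ereal_def by auto

lemma A_low_nonpos_iff: "A_low X A x \<psi> s \<le> 0 \<longleftrightarrow> (\<forall>\<phi>\<in>X. \<psi> \<le> \<phi> \<longrightarrow> A x \<phi> s \<le> 0)"
  unfolding A_low_def SUP_le_iff zero_ereal_def by auto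

theorem mainTheorem5:
  fixes \<Omega> :: "'a::euclidean_space set"
    and g :: "'a \<Rightarrow> real"
    and X :: "('a \<Rightarrow> real) set"
    and A :: "'a \<Rightarrow> ('a \<Rightarrow> real) \<Rightarrow> real \<Rightarrow> real"
  assumes "open \<Omega>" and "connected \<Omega>"
    and "X \<subseteq> Xbar"
    and a: "\<And>x \<phi>1 \<phi>2 s. x \<in> \<Omega> \<Longrightarrow> \<phi>1 \<in> X \<Longrightarrow> \<phi>2 \<in> X \<Longrightarrow> \<phi>1 \<le> \<phi>2 \<Longrightarrow> A x \<phi>2 s \<le> A x \<phi>1 s"
    and b: "\<And>x \<phi> s1 s2. x \<in> \<Omega> \<Longrightarrow> \<phi> \<in> X \<Longrightarrow> s1 \<le> s2 \<Longrightarrow> A x \<phi> s1 \<le> A x \<phi> s2"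
    and c: "\<And>x \<phi>. x \<in> \<Omega> \<Longrightarrow> \<phi> \<in> X \<Longrightarrow> \<exists>!s. A x \<phi> s = 0"
  shows
    "(\<forall>u \<in> Xbar. (\<forall>y. y \<notin> \<Omega> \<longrightarrow> u y \<ge> g y) \<longrightarrow>
        (((\<forall>x\<in>\<Omega>. \<forall>\<phi>\<in>X. \<phi> \<le> u \<longrightarrow> A x \<phi> (u x) \<ge> 0)
           \<longleftrightarrow> (\<forall>x\<in>\<Omega>. ereal (u x) \<ge> frak_a_up X A x u))
         \<and> ((\<forall>x\<in>\<Omega>. ereal (u x) \<ge> frak_a_up X A x u)
           \<longleftrightarrow> (\<forall>x\<in>\<Omega>. A_up X A x u (u x) \<ge> 0))))
     \<and> (\<forall>u \<in> Xbar. (\<forall>y. y \<notin> \<Omega> \<longrightarrow> u y \<le> g y) \<longrightarrow>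
        (((\<forall>x\<in>\<Omega>. \<forall>\<phi>\<in>X. \<phi> \<ge> u \<longrightarrow> A x \<phi> (u x) \<le> 0)
           \<longleftrightarrow> (\<forall>x\<in>\<Omega>. ereal (u x) \<le> frak_a_low X A x u))
         \<and> ((\<forall>x\<in>\<Omega>. ereal (u x) \<le> frak_a_low X A x u)
           \<longleftrightarrow> (\<forall>x\<in>\<Omega>. A_low X A x u (u x) \<le> 0))))"
proof -
  have mono_unique_zero: "mono (A x \<phi>) \<and> (\<exists>!s. A x \<phi> s = 0)" if "x \<in> \<Omega>" "\<phi> \<in> X" for x \<phi>
    using c[OF that] by (blast intro: monoI b[OF that])
  have "frak_a_up X A x u \<le> ereal (u x) \<longleftrightarrow> (\<forall>\<phi>\<in>X. \<phi> \<le> u \<longrightarrow> 0 \<le> A x \<phi> (u x))"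
    and "ereal (u x) \<le> frak_a_low X A x u \<longleftrightarrow> (\<forall>\<phi>\<in>X. u \<le> \<phi> \<longrightarrow> A x \<phi> (u x) \<le> 0)"
    if "x \<in> \<Omega>" for x u
    using frak_a_up_le_iff[of X A x, OF mono_unique_zero[OF that]]
      le_frak_a_low_iff[of X A x, OF mono_unique_zero[OF that]]
    by auto
  then show ?thesis
    by (simp add: A_up_nonneg_iff A_low_nonpos_iff cong: ball_cong)
qed

end
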